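(* Let $X_j^t$ be a fresh sample from the target domain, let $Z_j^t=\ell^{\mathrm{ent}}(f_{\hat\theta+\omega}(X_j^t))$ be the corresponding target entropy, and let $u_j=F_s(Z_j^t)$. Assume that $F_s$ is invertible and that $Z_j^t$ is a continuous random variable, and suppose the betting function is the true likelihood ratio $$b^{\mathrm{opt}}_u(u)=\frac{dF_t^j\big(F_s^{-1}(u)\big)}{dF_s\big(F_s^{-1}(u)\big)},\qquad u\in[0,1].$$ Let $Q^{\mathrm{opt}}(u)=\int_0^u b^{\mathrm{opt}}_u(v)\,dv$ (the alternative distribution on $[0,1]$ whose density with respect to the uniform null $\mathrm{Uniform}(0,1)$ is $b^{\mathrm{opt}}_u$). Then the adapted value $\tilde Z_j^t=F_s^{-1}\big(Q^{\mathrm{opt}}(u_j)\big)$, i.e. the map $z\mapsto F_s^{-1}\big(Q^{\mathrm{opt}}(F_s(z))\big)$ applied to $Z_j^t$, is the optimal transport map from the distribution of the target entropies $Z_j^t$ to the distribution of the source entropies $Z^s$ with respect to the Wasserstein distance.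
   Context: A $K$-class classifier $f_\theta$ maps an input $x\in\mathbb{R}^d$ to a probability vector $(f_\theta(x)_1,\dots,f_\theta(x)_K)$. The entropy loss is $\ell^{\mathrm{ent}}(f_\theta(x))=-\sum_{y=1}^K f_\theta(x)_y\log f_\theta(x)_y$. $f_{\hat\theta}$ is a classifier pretrained on a source distribution $P^s$, and $f_{\hat\theta+\omega}$ is an adapted classifier (parameters modified by $\omega$). The source entropy is $Z^s=\ell^{\mathrm{ent}}(f_{\hat\theta}(X^s))$ with $X^s\sim P^s$; $F_s$ denotes its CDF and $dF_s$ its density. The target entropy $Z_j^t$ has CDF $F_t^j$ with density $dF_t^j$. The optimal transport map between one-dimensional distributions is with respect to the Wasserstein distance as stated. *)

theory Defs
  imports "HOL-Probability.Probability"
begin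

definition ent_loss :: "real ^ 'k \<Rightarrow> real" where
  "ent_loss q = - (\<Sum>y\<in>UNIV. q $ y * ln (q $ y))"

definition prob_vector :: "real ^ 'k \<Rightarrow> bool" where
  "prob_vector q \<longleftrightarrow> (\<forall>y. 0 \<le> q $ y) \<and> (\<Sum>y\<in>UNIV. q $ y) = 1"

definition couplings :: "real measure \<Rightarrow> real measure \<Rightarrow> (real \<times> real) measure set" where
  "couplings \<mu> \<nu> = {\<pi>. sets \<pi> = sets (borel :: (real \<times> real) measure) \<and> prob_space \<pi>
        \<and> distr \<pi> borel fst = \<mu> \<and> distr \<pi> borel snd = \<nu>}"

definition wasserstein_pow :: "real \<Rightarrow> real measure \<Rightarrow> real measure \<Rightarrow> ennreal" where
  "wasserstein_pow p \<mu> \<nu> =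
     (INF \<pi>\<in>couplings \<mu> \<nu>. \<integral>\<^sup>+ xy. ennreal (\<bar>fst xy - snd xy\<bar> powr p) \<partial>\<pi>)"

definition optimal_transport_map ::
    "real \<Rightarrow> real measure \<Rightarrow> real measure \<Rightarrow> (real \<Rightarrow> real) \<Rightarrow> bool" where
  "optimal_transport_map p \<mu> \<nu> T \<longleftrightarrow>
     T \<in> borel_measurable \<mu> \<and> distr \<mu> borel T = \<nu> \<and>
     (\<integral>\<^sup>+ z. ennreal (\<bar>z - T z\<bar> powr p) \<partial>\<mu>) = wasserstein_pow p \<mu> \<nu>"

end

theory Submission
  imports Defs
begin

(* Since v = F_s(w) has dv = f_s(w) dw, the integral Q_opt(F_s z) of the likelihood ratio
   f_t/f_s over the quantile scale equals F_t(z); so the map is the monotone rearrangement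
   F_s^{-1} o F_t. The probability integral transform sends the target law to the uniform
   law on [0,1] and F_s^{-1} sends that to the source law, so the map is a transport map.

   Optimality for the cost |x - y|^p, p >= 1, follows from Taylor's formula
   |w|^p = integral over b > 0 of p(p-1) b^(p-2) ((w - b)_+ + (-w - b)_+), and
   (x - y - b)_+ = integral over t of [t <= x, y < t - b]. Thus the cost of a coupling is a
   positive mixture of probabilities of quadrants {t <= x, y < s} and {t <= y, x < s}. For
   every coupling these are at least F_s(s) - F_t(t) resp. F_t(s) - F_s(t), and the
   monotone coupling attains all of these bounds. *)

section \<open>Atomless distributions and the probability integral transform\<close>

locale atomless_real_distribution = real_distribution M for M :: "real measure" +
  assumes measure_singleton: "measure M {x} = 0"
begin

lemma continuous_on_cdf: "continuous_on A (cdf M)"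
  using isCont_cdf measure_singleton by (simp add: continuous_at_imp_continuous_on)

lemma borel_measurable_cdf[measurable]: "cdf M \<in> borel_measurable borel"
  by (intro borel_measurable_mono monoI cdf_nondecreasing)

lemma measure_lessThan_eq_cdf: "measure M {..<x} = cdf M x"
proof -
  have "measure M {..x} = measure M ({..<x} \<union> {x})"
    by (intro arg_cong[where f = "measure M"]) auto
  also have "\<dots> = measure M {..<x} + measure M {x}"
    by (rule finite_measure_Union) auto
  finally show ?thesis by (simp add: cdf_def measure_singleton)
qed

lemma sublevel_cdf_eq_atMost:
  assumes "t < 1" and "cdf M x\<^sub>0 \<le> t"
  obtains s where "{x. cdf M x \<le> t} = {..s}" and "cdf M s = t"
proof -
  let ?D = "{x. cdf M x \<le> t}"
  have "eventually (\<lambda>x. t < cdf M x) at_top"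
    using order_tendstoD(1)[OF cdf_lim_at_top_prob \<open>t < 1\<close>] .
  then obtain b where b: "\<And>x. b \<le> x \<Longrightarrow> t < cdf M x"
    by (auto simp: eventually_at_top_linorder)
  have bdd: "bdd_above ?D"
  proof (rule bdd_aboveI)
    show "x \<le> b" if "x \<in> ?D" for x
      using that b[of x] by (cases "b \<le> x") auto
  qed
  define s where "s = Sup ?D"
  have "closed ?D"
    using continuous_on_cdf by (intro closed_Collect_le continuous_on_const)
  then have "s \<in> ?D"
    unfolding s_def using assms(2) bdd by (intro closed_contains_Sup) auto
  have D_eq: "?D = {..s}"
  proof
    show "?D \<subseteq> {..s}" using bdd by (auto simp: s_def intro: cSup_upper)
    show "{..s} \<subseteq> ?D" using \<open>s \<in> ?D\<close> by (auto intro: order_trans[OF cdf_nondecreasing])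
  qed
  have "t \<le> cdf M s"
  proof (rule ccontr)
    assume "\<not> t \<le> cdf M s"
    moreover have "(cdf M \<longlongrightarrow> cdf M s) (at s)"
      using continuous_on_cdf[of UNIV] by (simp add: continuous_on_eq_continuous_at isContD)
    ultimately have "eventually (\<lambda>y. cdf M y < t) (at s)"
      by (intro order_tendstoD(2)) auto
    then obtain d where "0 < d" and d: "\<And>y. y \<noteq> s \<Longrightarrow> dist y s < d \<Longrightarrow> cdf M y < t"
      by (auto simp: eventually_at)
    have "cdf M (s + d / 2) < t"
      using \<open>0 < d\<close> by (intro d) (auto simp: dist_real_def)
    then have "s + d / 2 \<in> ?D" by simp
    then show False using D_eq \<open>0 < d\<close> by auto
  qed
  then show ?thesis using \<open>s \<in> ?D\<close> by (intro that[OF D_eq]) simp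
qed

lemma measure_cdf_le:
  assumes "0 \<le> t" "t \<le> 1"
  shows "measure M {x. cdf M x \<le> t} = t"
proof (cases "t < 1 \<and> (\<exists>x. cdf M x \<le> t)")
  case True
  then obtain s where "{x. cdf M x \<le> t} = {..s}" "cdf M s = t"
    using sublevel_cdf_eq_atMost by blast
  then show ?thesis by (simp add: cdf_def)
next
  case False
  then consider "t = 1" | "\<And>x. t < cdf M x" using assms(2) not_le by fastforce
  then show ?thesis
  proof cases
    case 1
    then show ?thesis using cdf_bounded_prob prob_space by simp
  next
    case 2
    have "t \<le> 0"
      by (intro tendsto_lowerbound[OF cdf_lim_at_bot] always_eventually allI less_imp_le 2) simp
    then show ?thesis using 2 assms(1) by (simp add: not_le[symmetric])
  qed
qed

lemma distr_cdf_uniform: "distr M borel (cdf M) = uniform_measure lborel {0..1}"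
proof -
  have "distributed M lborel (cdf M) (\<lambda>x. ennreal (indicator {0..1} x / measure lborel {0..1::real}))"
    by (rule uniform_distrI_borel_atLeastAtMost) (simp_all add: measure_cdf_le)
  then have "distr M lborel (cdf M) = uniform_measure lborel {0..1}"
    by (simp add: distributed_distr_eq_density uniform_measure_def divide_ennreal_def ennreal_indicator)
  moreover have "distr M borel (cdf M) = distr M lborel (cdf M)"
    by (rule distr_cong) simp_all
  ultimately show ?thesis by simp
qed

lemma AE_cdf_injective: "AE z in M. cdf M z \<in> {0<..<1} \<and> (\<forall>z'. cdf M z' = cdf M z \<longrightarrow> z' = z)"
proof -
  define C where "C = cdf M ` \<rat> \<union> {0, 1}"
  have "C \<in> null_sets lborel"
    unfolding C_def by (intro countable_imp_null_set_lborel) (auto simp: countable_rat)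
  then have "AE v in uniform_measure lborel {0..1}. v \<notin> C"
    by (intro AE_uniform_measureI AE_not_in[THEN eventually_mono]) auto
  then have "AE z in M. cdf M z \<notin> C"
    using \<open>C \<in> null_sets lborel\<close>
    by (subst (asm) distr_cdf_uniform[symmetric], subst (asm) AE_distr_iff) auto
  then show ?thesis
  proof (rule eventually_mono)
    fix z assume z: "cdf M z \<notin> C"
    \<comment> \<open>a plateau of the cdf contains a rational, so its value lies in the null set C\<close>
    have plateau: "cdf M a \<in> cdf M ` \<rat>" if "a < b" "cdf M b = cdf M a" for a b
    proof -
      obtain q where q: "q \<in> \<rat>" "a < q" "q < b" using Rats_dense_in_real \<open>a < b\<close> by blast
      then have "cdf M q = cdf M a"
        using cdf_nondecreasing[of a q] cdf_nondecreasing[of q b] that by simp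
      then show ?thesis using q(1) by (metis image_eqI)
    qed
    have "z' = z" if "cdf M z' = cdf M z" for z'
    proof (rule ccontr)
      assume "z' \<noteq> z"
      then have "cdf M z \<in> cdf M ` \<rat>"
        using plateau[of z z'] plateau[of z' z] that by (cases "z < z'") auto
      then show False using z by (simp add: C_def)
    qed
    moreover have "cdf M z \<in> {0<..<1}"
      using z cdf_nonneg[of z] cdf_bounded_prob[of z] by (auto simp: C_def less_le)
    ultimately show "cdf M z \<in> {0<..<1} \<and> (\<forall>z'. cdf M z' = cdf M z \<longrightarrow> z' = z)" by blast
  qed
qed

lemma AE_cdf_le_iff: "AE w in M. (cdf M w \<le> cdf M z) = (w \<le> z)"
  using AE_cdf_injective
proof (rule eventually_mono)
  fix w assume injective: "cdf M w \<in> {0<..<1} \<and> (\<forall>w'. cdf M w' = cdf M w \<longrightarrow> w' = w)"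
  have "w \<le> z" if "cdf M w \<le> cdf M z"
  proof (rule ccontr)
    assume "\<not> w \<le> z"
    then have "cdf M z = cdf M w" using that cdf_nondecreasing[of z w] by simp
    then show False using injective \<open>\<not> w \<le> z\<close> by auto
  qed
  then show "(cdf M w \<le> cdf M z) = (w \<le> z)" using cdf_nondecreasing[of w z] by auto
qed

lemma nn_integral_cdf_substitution:
  assumes [measurable]: "g \<in> borel_measurable borel"
  shows "(\<integral>\<^sup>+v. g v * indicator {0..1} v \<partial>lborel) = (\<integral>\<^sup>+z. g (cdf M z) \<partial>M)"
proof -
  have "(\<integral>\<^sup>+z. g (cdf M z) \<partial>M) = (\<integral>\<^sup>+v. g v \<partial>uniform_measure lborel {0..1})"
    by (simp add: distr_cdf_uniform[symmetric] nn_integral_distr)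
  then show ?thesis by (simp add: nn_integral_uniform_measure divide_ennreal_def)
qed

lemma emeasure_le_if_AE_cdf_in_interval:
  assumes "AE z in M. z \<in> A \<longrightarrow> cdf M z \<in> {a..b}"
  shows "emeasure M A \<le> ennreal (b - a)"
proof -
  have "{z \<in> space M. cdf M z \<in> {a..b}} \<in> sets M" by measurable
  then have "emeasure M A \<le> emeasure M {z. cdf M z \<in> {a..b}}"
    using assms by (intro emeasure_mono_AE) auto
  also have "\<dots> = emeasure (distr M borel (cdf M)) {a..b}"
    by (subst emeasure_distr) (auto simp: vimage_def)
  also have "\<dots> = emeasure lborel ({0..1} \<inter> {a..b})"
    by (simp add: distr_cdf_uniform divide_ennreal_def)
  also have "\<dots> \<le> emeasure lborel {a..b}" by (intro emeasure_mono) auto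
  also have "\<dots> = ennreal (b - a)"
    by (cases "a \<le> b") (auto simp: ennreal_neg)
  finally show ?thesis .
qed

end

lemma atomless_real_distribution_density:
  fixes f :: "real \<Rightarrow> real"
  assumes [measurable]: "f \<in> borel_measurable borel" and "prob_space (density lborel f)"
  shows "atomless_real_distribution (density lborel f)"
proof -
  have "measure (density lborel f) {x} = 0" for x
  proof -
    have "AE y in lborel. y \<in> {x} \<longrightarrow> ennreal (f y) = 0"
      using AE_lborel_singleton[of x] by (rule eventually_mono) simp
    then have "{x} \<in> null_sets (density lborel f)"
      by (simp add: null_sets_density_iff)
    then show ?thesis by (rule measure_eq_0_null_sets)
  qed
  moreover have "real_distribution (density lborel f)"
    using assms(2) by (intro real_distribution.intro real_distribution_axioms.intro) simp_all
  ultimately show ?thesis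
    by (intro atomless_real_distribution.intro atomless_real_distribution_axioms.intro)
qed

section \<open>Quantile functions\<close>

context
  fixes F :: "real \<Rightarrow> real" and S :: "real set"
  assumes bij: "bij_betw F S {0<..<1}" and mono: "mono F"
begin

lemma inv_into_le_imp_le: "u \<in> {0<..<1} \<Longrightarrow> inv_into S F u \<le> x \<Longrightarrow> u \<le> F x"
  using monoD[OF mono] bij_betw_inv_into_right[OF bij] by metis

lemma le_inv_into_imp_le: "u \<in> {0<..<1} \<Longrightarrow> x \<le> inv_into S F u \<Longrightarrow> F x \<le> u"
  using monoD[OF mono] bij_betw_inv_into_right[OF bij] by metis

lemma less_imp_inv_into_le: "u \<in> {0<..<1} \<Longrightarrow> u < F x \<Longrightarrow> inv_into S F u \<le> x"
  using le_inv_into_imp_le[of u x] by fastforce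

lemma mono_on_inv_into: "mono_on {0<..<1} (inv_into S F)"
proof (rule mono_onI)
  fix u v :: real assume uv: "u \<in> {0<..<1}" "v \<in> {0<..<1}" "u \<le> v"
  show "inv_into S F u \<le> inv_into S F v"
  proof (cases "u = v")
    case False
    then show ?thesis
      using uv by (intro less_imp_inv_into_le) (auto simp: bij_betw_inv_into_right[OF bij])
  qed simp
qed

lemma borel_measurable_inv_into: "inv_into S F \<in> borel_measurable borel"
proof -
  have "inv_into S F u = (SOME y. False)" if "u \<notin> {0<..<1}" for u
  proof -
    have "\<not> (y \<in> S \<and> F y = u)" for y using that bij by (auto simp: bij_betw_def)
    then show ?thesis unfolding inv_into_def by (intro arg_cong[where f = Eps]) auto
  qed
  then have eq: "inv_into S F = (\<lambda>u. if u \<in> {0<..<1} then inv_into S F u else SOME y. False)"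
    by auto
  have "inv_into S F \<in> borel_measurable (restrict_space borel {0<..<1})"
    by (rule borel_measurable_mono_on_fnc[OF mono_on_inv_into])
  then show ?thesis
    by (subst eq, subst measurable_If_restrict_space_iff) (auto simp del: greaterThanLessThan_iff)
qed

end

lemma (in real_distribution) borel_measurable_inv_into_cdf:
  "bij_betw (cdf M) S {0<..<1} \<Longrightarrow> inv_into S (cdf M) \<in> borel_measurable borel"
  by (intro borel_measurable_inv_into monoI cdf_nondecreasing)

lemma (in real_distribution) distr_uniform_inv_into_cdf:
  assumes bij: "bij_betw (cdf M) S {0<..<1}"
  shows "distr (uniform_measure lborel {0..1}) borel (inv_into S (cdf M)) = M"
proof (rule cdf_unique)
  let ?U = "uniform_measure lborel {0..1::real}" and ?G = "inv_into S (cdf M)"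
  have mono: "mono (cdf M)" by (intro monoI cdf_nondecreasing)
  note [measurable] = borel_measurable_inv_into_cdf[OF bij]
  have "prob_space ?U" by (intro prob_space_uniform_measure) auto
  then show "real_distribution (distr ?U borel ?G)"
    by (intro real_distribution.intro real_distribution_axioms.intro prob_space.prob_space_distr) auto
  show "real_distribution M" ..
  show "cdf (distr ?U borel ?G) = cdf M"
  proof
    fix x
    have "{0, 1, cdf M x} \<in> null_sets lborel" by (intro countable_imp_null_set_lborel) auto
    then have "AE v in lborel. v \<in> {0..1} \<longrightarrow> v \<in> {0<..<1} \<and> v \<noteq> cdf M x"
      by (rule AE_not_in[THEN eventually_mono]) auto
    then have "AE v in lborel. v \<in> {0..1} \<longrightarrow> (?G v \<le> x) = (v \<le> cdf M x)"
      by eventually_elim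
        (use inv_into_le_imp_le[OF bij mono] less_imp_inv_into_le[OF bij mono] in fastforce)
    then have ae: "AE v in ?U. (?G v \<le> x) = (v \<le> cdf M x)"
      by (rule AE_uniform_measureI[rotated]) simp
    have G_meas: "?G \<in> borel_measurable ?U"
      using borel_measurable_inv_into_cdf[OF bij] by (simp add: measurable_cong_sets[of ?U borel])
    then have "cdf (distr ?U borel ?G) x = measure ?U (?G -` {..x} \<inter> space ?U)"
      unfolding cdf_def2 by (rule measure_distr) simp
    also have "\<dots> = measure ?U {..cdf M x}"
      using ae measurable_sets[OF G_meas, of "{..x}"] by (intro measure_eq_AE) auto
    also have "\<dots> = measure lborel ({0..1} \<inter> {..cdf M x})" by simp
    also have "{0..1} \<inter> {..cdf M x} = {0..cdf M x}" using cdf_bounded_prob[of x] by auto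
    also have "measure lborel {0..cdf M x} = cdf M x" using cdf_nonneg[of x] by simp
    finally show "cdf (distr ?U borel ?G) x = cdf M x" .
  qed
qed

section \<open>Hinge representation of the cost\<close>

lemma has_integral_powr_taylor:
  fixes a p :: real
  assumes "0 \<le> a" "1 < p"
  shows "((\<lambda>b. p * (p - 1) * b powr (p - 2) * (a - b)) has_integral a powr p) {0..a}"
proof -
  let ?c = "p * (p - 1)"
  have mult_powr: "x * x powr (q - 1) = x powr q" if "0 \<le> x" for x q :: real
    using that powr_mult_base[of x "q - 1"] by (cases "x = 0") auto
  have "((\<lambda>b. b powr (p - 2)) has_integral a powr (p - 1) / (p - 1)) {0..a}"
    using has_integral_powr_from_0[of "p - 2" a] assms by simp
  moreover have "((\<lambda>b. b powr (p - 1)) has_integral a powr p / p) {0..a}"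
    using has_integral_powr_from_0[of "p - 1" a] assms by simp
  ultimately have int: "((\<lambda>b. ?c * a * b powr (p - 2) - ?c * b powr (p - 1))
      has_integral ?c * a * (a powr (p - 1) / (p - 1)) - ?c * (a powr p / p)) {0..a}"
    by (intro has_integral_diff has_integral_mult_right)
  have "?c * a * (a powr (p - 1) / (p - 1)) - ?c * (a powr p / p)
      = p * (a * a powr (p - 1)) - (p - 1) * a powr p"
    using assms by (simp add: field_simps)
  also have "\<dots> = a powr p"
    using mult_powr[of a p] assms by (simp add: algebra_simps)
  finally have "((\<lambda>b. ?c * a * b powr (p - 2) - ?c * b powr (p - 1)) has_integral a powr p) {0..a}"
    using int by simp
  then show ?thesis
  proof (rule has_integral_eq[rotated])
    show "?c * a * b powr (p - 2) - ?c * b powr (p - 1) = ?c * b powr (p - 2) * (a - b)"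
      if "b \<in> {0..a}" for b
      using that mult_powr[of b "p - 1"] by (simp add: algebra_simps)
  qed
qed

definition hinge_weight :: "real \<Rightarrow> real \<Rightarrow> ennreal" where
  "hinge_weight p b = ennreal (if 0 < b then p * (p - 1) * b powr (p - 2) else 0)"

definition two_sided_hinge :: "real \<Rightarrow> real \<Rightarrow> ennreal" where
  "two_sided_hinge w b = ennreal (max 0 (w - b)) + ennreal (max 0 (- w - b))"

lemma measurable_hinge_weight[measurable]:
  assumes [measurable]: "f \<in> borel_measurable M"
  shows "(\<lambda>x. hinge_weight p (f x)) \<in> borel_measurable M"
  unfolding hinge_weight_def by measurable

lemma measurable_two_sided_hinge[measurable]:
  assumes [measurable]: "f \<in> borel_measurable M" "g \<in> borel_measurable M"
  shows "(\<lambda>x. two_sided_hinge (f x) (g x)) \<in> borel_measurable M"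
  unfolding two_sided_hinge_def by measurable

lemma nn_integral_hinge_eq_abs_powr:
  assumes "1 < p"
  shows "(\<integral>\<^sup>+b. hinge_weight p b * two_sided_hinge w b \<partial>lborel) = ennreal (\<bar>w\<bar> powr p)"
proof -
  let ?f = "\<lambda>b. p * (p - 1) * b powr (p - 2) * (\<bar>w\<bar> - b)"
  have "hinge_weight p b * two_sided_hinge w b = ennreal (indicator {0..\<bar>w\<bar>} b * ?f b)" for b
  proof (cases "0 < b")
    case True
    then have "two_sided_hinge w b = ennreal (max 0 (\<bar>w\<bar> - b))"
      by (auto simp: two_sided_hinge_def max_def abs_real_def)
    then show ?thesis
      using True assms by (auto simp: hinge_weight_def indicator_def ennreal_mult[symmetric] max_def)
  next
    case False
    then show ?thesis by (cases "b = 0") (auto simp: hinge_weight_def indicator_def)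
  qed
  then have "(\<integral>\<^sup>+b. hinge_weight p b * two_sided_hinge w b \<partial>lborel)
      = (\<integral>\<^sup>+b. ennreal (indicator {0..\<bar>w\<bar>} b * ?f b) \<partial>lborel)"
    by simp
  also have "\<dots> = ennreal (\<bar>w\<bar> powr p)"
    using assms by (intro nn_integral_has_integral_lebesgue has_integral_powr_taylor) auto
  finally show ?thesis .
qed

lemma nn_integral_pos_part_eq_layers:
  fixes g h :: "'a \<Rightarrow> real"
  assumes "sigma_finite_measure M"
    and [measurable]: "g \<in> borel_measurable M" "h \<in> borel_measurable M"
  shows "(\<integral>\<^sup>+x. ennreal (max 0 (g x - h x - b)) \<partial>M)
    = (\<integral>\<^sup>+t. emeasure M {x \<in> space M. t \<le> g x \<and> h x < t - b} \<partial>lborel)"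
proof -
  interpret pair_sigma_finite M lborel
    using assms(1) by (intro pair_sigma_finite.intro sigma_finite_lborel)
  have "ennreal (max 0 (g x - h x - b)) = (\<integral>\<^sup>+t. indicator {h x + b<..g x} t \<partial>lborel)" for x
    by (cases "h x + b \<le> g x") auto
  then have "(\<integral>\<^sup>+x. ennreal (max 0 (g x - h x - b)) \<partial>M)
      = (\<integral>\<^sup>+x. (\<integral>\<^sup>+t. indicator {h x + b<..g x} t \<partial>lborel) \<partial>M)"
    by simp
  also have "\<dots> = (\<integral>\<^sup>+t. (\<integral>\<^sup>+x. indicator {h x + b<..g x} t \<partial>M) \<partial>lborel)"
    by (rule Fubini'[symmetric]) (simp add: indicator_def, measurable)
  also have "\<dots> = (\<integral>\<^sup>+t. emeasure M {x \<in> space M. t \<le> g x \<and> h x < t - b} \<partial>lborel)"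
  proof (intro nn_integral_cong)
    fix t :: real
    have "(\<integral>\<^sup>+x. indicator {h x + b<..g x} t \<partial>M)
        = (\<integral>\<^sup>+x. indicator {x \<in> space M. t \<le> g x \<and> h x < t - b} x \<partial>M)"
      by (intro nn_integral_cong) (auto simp: indicator_def)
    then show "(\<integral>\<^sup>+x. indicator {h x + b<..g x} t \<partial>M)
        = emeasure M {x \<in> space M. t \<le> g x \<and> h x < t - b}"
      by simp
  qed
  finally show ?thesis .
qed

lemma nn_integral_two_sided_hinge_eq_layers:
  fixes \<rho> :: "(real \<times> real) measure"
  assumes sets: "sets \<rho> = sets borel" and "sigma_finite_measure \<rho>"
  shows "(\<integral>\<^sup>+xy. two_sided_hinge (fst xy - snd xy) b \<partial>\<rho>)
    = (\<integral>\<^sup>+t. emeasure \<rho> {xy. t \<le> fst xy \<and> snd xy < t - b} \<partial>lborel)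
      + (\<integral>\<^sup>+t. emeasure \<rho> {xy. t \<le> snd xy \<and> fst xy < t - b} \<partial>lborel)"
proof -
  have [measurable]: "fst \<in> borel_measurable \<rho>" "snd \<in> borel_measurable \<rho>"
    by (simp_all add: measurable_cong_sets[OF sets refl] borel_prod[symmetric])
  have space: "space \<rho> = UNIV" using sets_eq_imp_space_eq[OF sets] by simp
  have "(\<integral>\<^sup>+xy. two_sided_hinge (fst xy - snd xy) b \<partial>\<rho>)
      = (\<integral>\<^sup>+xy. ennreal (max 0 (fst xy - snd xy - b)) \<partial>\<rho>)
        + (\<integral>\<^sup>+xy. ennreal (max 0 (snd xy - fst xy - b)) \<partial>\<rho>)"
    unfolding two_sided_hinge_def by (subst nn_integral_add[symmetric]) simp_all
  also have "\<dots> = (\<integral>\<^sup>+t. emeasure \<rho> {xy. t \<le> fst xy \<and> snd xy < t - b} \<partial>lborel)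
      + (\<integral>\<^sup>+t. emeasure \<rho> {xy. t \<le> snd xy \<and> fst xy < t - b} \<partial>lborel)"
    using nn_integral_pos_part_eq_layers[OF assms(2), of fst snd b]
      nn_integral_pos_part_eq_layers[OF assms(2), of snd fst b]
    by (simp add: space)
  finally show ?thesis .
qed

lemma nn_integral_abs_powr_diff_eq_hinge:
  fixes \<rho> :: "(real \<times> real) measure"
  assumes sets: "sets \<rho> = sets borel" and "sigma_finite_measure \<rho>" "1 < p"
  shows "(\<integral>\<^sup>+xy. ennreal (\<bar>fst xy - snd xy\<bar> powr p) \<partial>\<rho>)
    = (\<integral>\<^sup>+b. hinge_weight p b * (\<integral>\<^sup>+xy. two_sided_hinge (fst xy - snd xy) b \<partial>\<rho>) \<partial>lborel)"
proof -
  interpret pair_sigma_finite \<rho> lborel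
    using assms(2) by (intro pair_sigma_finite.intro sigma_finite_lborel)
  have [measurable]: "fst \<in> borel_measurable \<rho>" "snd \<in> borel_measurable \<rho>"
    by (simp_all add: measurable_cong_sets[OF sets refl] borel_prod[symmetric])
  have "(\<integral>\<^sup>+xy. ennreal (\<bar>fst xy - snd xy\<bar> powr p) \<partial>\<rho>)
      = (\<integral>\<^sup>+xy. (\<integral>\<^sup>+b. hinge_weight p b * two_sided_hinge (fst xy - snd xy) b \<partial>lborel) \<partial>\<rho>)"
    using nn_integral_hinge_eq_abs_powr[OF assms(3)] by simp
  also have "\<dots> = (\<integral>\<^sup>+b. (\<integral>\<^sup>+xy. hinge_weight p b * two_sided_hinge (fst xy - snd xy) b \<partial>\<rho>) \<partial>lborel)"
    by (rule Fubini'[symmetric]) measurable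
  also have "\<dots> = (\<integral>\<^sup>+b. hinge_weight p b * (\<integral>\<^sup>+xy. two_sided_hinge (fst xy - snd xy) b \<partial>\<rho>) \<partial>lborel)"
    by (intro nn_integral_cong nn_integral_cmult) measurable
  finally show ?thesis .
qed

lemma transport_cost_mono:
  fixes \<pi> \<pi>' :: "(real \<times> real) measure"
  assumes sets: "sets \<pi> = sets borel" "sets \<pi>' = sets borel"
    and sigma_finite: "sigma_finite_measure \<pi>" "sigma_finite_measure \<pi>'"
    and quadrant_le:
      "\<And>t s. emeasure \<pi>' {xy. t \<le> fst xy \<and> snd xy < s} \<le> emeasure \<pi> {xy. t \<le> fst xy \<and> snd xy < s}"
      "\<And>t s. emeasure \<pi>' {xy. t \<le> snd xy \<and> fst xy < s} \<le> emeasure \<pi> {xy. t \<le> snd xy \<and> fst xy < s}"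
    and "1 \<le> p"
  shows "(\<integral>\<^sup>+xy. ennreal (\<bar>fst xy - snd xy\<bar> powr p) \<partial>\<pi>')
    \<le> (\<integral>\<^sup>+xy. ennreal (\<bar>fst xy - snd xy\<bar> powr p) \<partial>\<pi>)"
proof -
  have hinge_le: "(\<integral>\<^sup>+xy. two_sided_hinge (fst xy - snd xy) b \<partial>\<pi>')
      \<le> (\<integral>\<^sup>+xy. two_sided_hinge (fst xy - snd xy) b \<partial>\<pi>)" for b
    unfolding nn_integral_two_sided_hinge_eq_layers[OF sets(1) sigma_finite(1)]
      nn_integral_two_sided_hinge_eq_layers[OF sets(2) sigma_finite(2)]
    by (intro add_mono nn_integral_mono quadrant_le)
  show ?thesis
  proof (cases "p = 1")
    case True
    have "ennreal (\<bar>w\<bar> powr 1) = two_sided_hinge w 0" for w :: real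
      by (cases "0 \<le> w") (auto simp: two_sided_hinge_def)
    then show ?thesis using hinge_le[of 0] True by simp
  next
    case False
    with \<open>1 \<le> p\<close> have "1 < p" by simp
    then show ?thesis
      unfolding nn_integral_abs_powr_diff_eq_hinge[OF sets(1) sigma_finite(1) \<open>1 < p\<close>]
        nn_integral_abs_powr_diff_eq_hinge[OF sets(2) sigma_finite(2) \<open>1 < p\<close>]
      by (intro nn_integral_mono mult_left_mono hinge_le) simp
  qed
qed

section \<open>The monotone rearrangement\<close>

lemma (in prob_space) prob_quadrant_ge:
  fixes X Y :: "'a \<Rightarrow> real"
  assumes [measurable]: "X \<in> borel_measurable M" "Y \<in> borel_measurable M"
  shows "prob {x \<in> space M. Y x < s} - prob {x \<in> space M. X x < t}
    \<le> prob {x \<in> space M. t \<le> X x \<and> Y x < s}"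
proof -
  have "prob {x \<in> space M. Y x < s}
      \<le> prob ({x \<in> space M. t \<le> X x \<and> Y x < s} \<union> {x \<in> space M. X x < t})"
    by (intro finite_measure_mono) (auto, measurable)
  also have "\<dots> \<le> prob {x \<in> space M. t \<le> X x \<and> Y x < s} + prob {x \<in> space M. X x < t}"
    by (intro measure_Un_le) auto
  finally show ?thesis by simp
qed

locale monotone_rearrangement =
  mu: atomless_real_distribution \<mu> + nu: atomless_real_distribution \<nu>
  for \<mu> \<nu> :: "real measure" +
  fixes S :: "real set"
  assumes bij_cdf: "bij_betw (cdf \<nu>) S {0<..<1}"
begin

definition rearrangement :: "real \<Rightarrow> real" where
  "rearrangement z = inv_into S (cdf \<nu>) (cdf \<mu> z)"

definition monotone_coupling :: "(real \<times> real) measure" where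
  "monotone_coupling = distr \<mu> borel (\<lambda>z. (z, rearrangement z))"

lemma mono_cdf_nu: "mono (cdf \<nu>)"
  by (intro monoI nu.cdf_nondecreasing)

lemma borel_measurable_rearrangement[measurable]: "rearrangement \<in> borel_measurable borel"
  using nu.borel_measurable_inv_into_cdf[OF bij_cdf]
  unfolding rearrangement_def[abs_def] by measurable

lemma distr_rearrangement: "distr \<mu> borel rearrangement = \<nu>"
proof -
  have "distr \<mu> borel rearrangement = distr (distr \<mu> borel (cdf \<mu>)) borel (inv_into S (cdf \<nu>))"
    using nu.borel_measurable_inv_into_cdf[OF bij_cdf]
    by (subst distr_distr) (auto simp: rearrangement_def[abs_def] comp_def)
  also have "\<dots> = \<nu>"
    by (simp add: mu.distr_cdf_uniform nu.distr_uniform_inv_into_cdf[OF bij_cdf])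
  finally show ?thesis .
qed

lemma emeasure_rearrangement_quadrant_le:
  shows "emeasure \<mu> {z. t \<le> z \<and> rearrangement z < s} \<le> ennreal (cdf \<nu> s - cdf \<mu> t)"
    and "emeasure \<mu> {z. t \<le> rearrangement z \<and> z < s} \<le> ennreal (cdf \<mu> s - cdf \<nu> t)"
proof -
  have AE_01: "AE z in \<mu>. cdf \<mu> z \<in> {0<..<1}"
    using mu.AE_cdf_injective by (rule eventually_mono) simp
  note inv_into_le_imp_le[OF bij_cdf mono_cdf_nu] le_inv_into_imp_le[OF bij_cdf mono_cdf_nu]
  then have "cdf \<mu> z \<in> {0<..<1} \<Longrightarrow> t \<le> z \<and> rearrangement z < s \<Longrightarrow> cdf \<mu> z \<in> {cdf \<mu> t..cdf \<nu> s}"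
    and "cdf \<mu> z \<in> {0<..<1} \<Longrightarrow> t \<le> rearrangement z \<and> z < s \<Longrightarrow> cdf \<mu> z \<in> {cdf \<nu> t..cdf \<mu> s}"
    for z
    using mu.cdf_nondecreasing[of t z] mu.cdf_nondecreasing[of z s]
    by (auto simp: rearrangement_def)
  then have "AE z in \<mu>. z \<in> {z. t \<le> z \<and> rearrangement z < s} \<longrightarrow> cdf \<mu> z \<in> {cdf \<mu> t..cdf \<nu> s}"
    and "AE z in \<mu>. z \<in> {z. t \<le> rearrangement z \<and> z < s} \<longrightarrow> cdf \<mu> z \<in> {cdf \<nu> t..cdf \<mu> s}"
    using AE_01 by (auto elim: eventually_mono)
  then show "emeasure \<mu> {z. t \<le> z \<and> rearrangement z < s} \<le> ennreal (cdf \<nu> s - cdf \<mu> t)"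
    and "emeasure \<mu> {z. t \<le> rearrangement z \<and> z < s} \<le> ennreal (cdf \<mu> s - cdf \<nu> t)"
    by (simp_all only: mu.emeasure_le_if_AE_cdf_in_interval)
qed

lemma coupling_quadrant_ge:
  assumes "\<pi> \<in> couplings \<mu> \<nu>"
  shows "ennreal (cdf \<nu> s - cdf \<mu> t) \<le> emeasure \<pi> {xy. t \<le> fst xy \<and> snd xy < s}"
    and "ennreal (cdf \<mu> s - cdf \<nu> t) \<le> emeasure \<pi> {xy. t \<le> snd xy \<and> fst xy < s}"
proof -
  have sets: "sets \<pi> = sets borel" and "prob_space \<pi>"
    and marginals: "distr \<pi> borel fst = \<mu>" "distr \<pi> borel snd = \<nu>"
    using assms by (auto simp: couplings_def)
  interpret prob_space \<pi> by fact
  have space: "space \<pi> = UNIV" using sets_eq_imp_space_eq[OF sets] by simp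
  have [measurable]: "fst \<in> borel_measurable \<pi>" "snd \<in> borel_measurable \<pi>"
    by (simp_all add: measurable_cong_sets[OF sets refl] borel_prod[symmetric])
  have "prob {xy. fst xy < a} = cdf \<mu> a" "prob {xy. snd xy < a} = cdf \<nu> a" for a
    using measure_distr[of fst \<pi> borel "{..<a}"] measure_distr[of snd \<pi> borel "{..<a}"]
    by (simp_all add: marginals space vimage_def mu.measure_lessThan_eq_cdf nu.measure_lessThan_eq_cdf)
  then show "ennreal (cdf \<nu> s - cdf \<mu> t) \<le> emeasure \<pi> {xy. t \<le> fst xy \<and> snd xy < s}"
    and "ennreal (cdf \<mu> s - cdf \<nu> t) \<le> emeasure \<pi> {xy. t \<le> snd xy \<and> fst xy < s}"
    using prob_quadrant_ge[of fst snd s t] prob_quadrant_ge[of snd fst s t]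
    by (simp_all add: space emeasure_eq_measure ennreal_leI)
qed

lemma monotone_coupling_in_couplings: "monotone_coupling \<in> couplings \<mu> \<nu>"
proof -
  have [measurable]: "(\<lambda>z. (z, rearrangement z)) \<in> borel_measurable borel"
    unfolding borel_prod[symmetric] by measurable
  have "distr monotone_coupling borel fst = \<mu>" "distr monotone_coupling borel snd = \<nu>"
    unfolding monotone_coupling_def
    by (subst distr_distr; simp add: comp_def borel_prod[symmetric] distr_rearrangement distr_id2)+
  moreover have "prob_space monotone_coupling"
    unfolding monotone_coupling_def by (rule mu.prob_space_distr) simp
  ultimately show ?thesis by (simp add: couplings_def monotone_coupling_def)
qed

lemma transport_cost_monotone_coupling:
  "(\<integral>\<^sup>+xy. ennreal (\<bar>fst xy - snd xy\<bar> powr p) \<partial>monotone_coupling)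
    = (\<integral>\<^sup>+z. ennreal (\<bar>z - rearrangement z\<bar> powr p) \<partial>\<mu>)"
  unfolding monotone_coupling_def
  by (subst nn_integral_distr) (simp_all add: borel_prod[symmetric])

lemma emeasure_monotone_coupling_quadrant_le:
  assumes "\<pi> \<in> couplings \<mu> \<nu>"
  shows "emeasure monotone_coupling {xy. t \<le> fst xy \<and> snd xy < s}
      \<le> emeasure \<pi> {xy. t \<le> fst xy \<and> snd xy < s}"
    and "emeasure monotone_coupling {xy. t \<le> snd xy \<and> fst xy < s}
      \<le> emeasure \<pi> {xy. t \<le> snd xy \<and> fst xy < s}"
proof -
  have "{xy \<in> space (borel \<Otimes>\<^sub>M borel). t \<le> fst xy \<and> snd xy < s} \<in> sets (borel \<Otimes>\<^sub>M borel)"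
    "{xy \<in> space (borel \<Otimes>\<^sub>M borel). t \<le> snd xy \<and> fst xy < s} \<in> sets (borel \<Otimes>\<^sub>M borel)"
    by measurable
  then have "{xy. t \<le> fst xy \<and> snd xy < s} \<in> sets (borel \<Otimes>\<^sub>M borel)"
    "{xy. t \<le> snd xy \<and> fst xy < s} \<in> sets (borel \<Otimes>\<^sub>M borel)"
    by (simp_all add: space_pair_measure)
  then have "emeasure monotone_coupling {xy. t \<le> fst xy \<and> snd xy < s}
      = emeasure \<mu> {z. t \<le> z \<and> rearrangement z < s}"
    and "emeasure monotone_coupling {xy. t \<le> snd xy \<and> fst xy < s}
      = emeasure \<mu> {z. t \<le> rearrangement z \<and> z < s}"
    unfolding monotone_coupling_def
    by (subst emeasure_distr; auto simp: borel_prod[symmetric] vimage_def)+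
  then show "emeasure monotone_coupling {xy. t \<le> fst xy \<and> snd xy < s}
      \<le> emeasure \<pi> {xy. t \<le> fst xy \<and> snd xy < s}"
    and "emeasure monotone_coupling {xy. t \<le> snd xy \<and> fst xy < s}
      \<le> emeasure \<pi> {xy. t \<le> snd xy \<and> fst xy < s}"
    using order_trans[OF emeasure_rearrangement_quadrant_le(1) coupling_quadrant_ge(1)[OF assms]]
      order_trans[OF emeasure_rearrangement_quadrant_le(2) coupling_quadrant_ge(2)[OF assms]]
    by simp_all
qed

theorem optimal_transport_map_rearrangement:
  assumes "1 \<le> p"
  shows "optimal_transport_map p \<mu> \<nu> rearrangement"
proof -
  let ?cost = "\<lambda>\<pi>. \<integral>\<^sup>+xy. ennreal (\<bar>fst xy - snd xy\<bar> powr p) \<partial>\<pi>"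
  have coupling_props: "sets \<pi> = sets borel" "sigma_finite_measure \<pi>" if "\<pi> \<in> couplings \<mu> \<nu>" for \<pi>
    using that by (auto simp: couplings_def intro: prob_space_imp_sigma_finite)
  have "?cost monotone_coupling \<le> ?cost \<pi>" if "\<pi> \<in> couplings \<mu> \<nu>" for \<pi>
    using coupling_props[OF that] coupling_props[OF monotone_coupling_in_couplings]
      emeasure_monotone_coupling_quadrant_le[OF that] assms
    by (intro transport_cost_mono)
  then have "?cost monotone_coupling = (INF \<pi>\<in>couplings \<mu> \<nu>. ?cost \<pi>)"
    using monotone_coupling_in_couplings by (intro antisym INF_greatest INF_lower) auto
  then show ?thesis
    by (simp add: optimal_transport_map_def wasserstein_pow_def distr_rearrangement
        transport_cost_monotone_coupling)
qed

end

section \<open>Likelihood ratios on the quantile scale\<close>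

lemma AE_density_absolutely_continuous:
  fixes f g :: "'a \<Rightarrow> real"
  assumes [measurable]: "f \<in> borel_measurable M" "g \<in> borel_measurable M"
    and "\<And>z. 0 \<le> f z" and "AE z in M. f z = 0 \<longrightarrow> g z = 0"
    and "AE z in density M f. P z"
  shows "AE z in density M g. P z"
proof -
  have "AE z in M. 0 < f z \<longrightarrow> P z" using assms(5) by (simp add: AE_density)
  then have "AE z in M. 0 < g z \<longrightarrow> P z"
    using assms(4) by eventually_elim (use assms(3) in \<open>force simp: less_le\<close>)
  then show ?thesis by (simp add: AE_density)
qed

lemma (in atomless_real_distribution) AE_inv_into_cdf:
  assumes "bij_betw (cdf M) S {0<..<1}"
  shows "AE z in M. inv_into S (cdf M) (cdf M z) = z"
  using AE_cdf_injective by (rule eventually_mono) (simp add: bij_betw_inv_into_right[OF assms])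

context
  fixes fs ft :: "real \<Rightarrow> real" and S :: "real set"
  assumes fs: "fs \<in> borel_measurable borel" and fs_nonneg: "\<And>z. 0 \<le> fs z"
    and ft: "ft \<in> borel_measurable borel" and ft_nonneg: "\<And>z. 0 \<le> ft z"
    and prob_fs: "prob_space (density lborel fs)" and prob_ft: "prob_space (density lborel ft)"
    and bij_cdf: "bij_betw (cdf (density lborel fs)) S {0<..<1}"
    and abs_cont: "AE z in lborel. fs z = 0 \<longrightarrow> ft z = 0"
begin

lemma nn_integral_likelihood_ratio_inv_into_cdf:
  "(\<integral>\<^sup>+v. ennreal (ft (inv_into S (cdf (density lborel fs)) v) / fs (inv_into S (cdf (density lborel fs)) v))
      * indicator {0..cdf (density lborel fs) z} v \<partial>lborel)
    = emeasure (density lborel ft) {..z}"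
proof -
  let ?Ms = "density lborel fs" and ?Mt = "density lborel ft"
  let ?F = "cdf ?Ms" let ?G = "inv_into S ?F" let ?b = "\<lambda>v. ft (?G v) / fs (?G v)"
  interpret Ms: atomless_real_distribution ?Ms
    by (rule atomless_real_distribution_density[OF fs prob_fs])
  note [measurable] = fs ft Ms.borel_measurable_inv_into_cdf[OF bij_cdf]
  have "AE w in lborel. 0 < fs w \<longrightarrow> ?G (?F w) = w"
    using Ms.AE_inv_into_cdf[OF bij_cdf] by (simp add: AE_density)
  then have pointwise: "AE w in lborel. ennreal (fs w) * (ennreal (?b (?F w)) * indicator {..?F z} (?F w))
      = ennreal (ft w) * indicator {w. ?F w \<le> ?F z} w"
    using abs_cont
    by eventually_elim
      (use fs_nonneg ft_nonneg in \<open>auto simp: ennreal_mult[symmetric] less_le split: split_indicator\<close>)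
  have "(\<integral>\<^sup>+v. ennreal (?b v) * indicator {0..?F z} v \<partial>lborel)
      = (\<integral>\<^sup>+v. (ennreal (?b v) * indicator {..?F z} v) * indicator {0..1} v \<partial>lborel)"
    using Ms.cdf_bounded_prob[of z] by (intro nn_integral_cong) (auto split: split_indicator)
  also have "\<dots> = (\<integral>\<^sup>+w. ennreal (?b (?F w)) * indicator {..?F z} (?F w) \<partial>?Ms)"
    by (rule Ms.nn_integral_cdf_substitution) measurable
  also have "\<dots> = (\<integral>\<^sup>+w. ennreal (ft w) * indicator {w. ?F w \<le> ?F z} w \<partial>lborel)"
    using pointwise by (simp add: nn_integral_density cong: nn_integral_cong_AE)
  also have "\<dots> = emeasure ?Mt {w. ?F w \<le> ?F z}"
    by (rule emeasure_density[symmetric]) auto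
  also have "\<dots> = emeasure ?Mt {..z}"
    using AE_density_absolutely_continuous[OF _ _ fs_nonneg abs_cont Ms.AE_cdf_le_iff]
    by (intro emeasure_eq_AE) auto
  finally show ?thesis .
qed

lemma integral_likelihood_ratio_inv_into_cdf:
  "(\<integral>v\<in>{0..cdf (density lborel fs) z}.
      ft (inv_into S (cdf (density lborel fs)) v) / fs (inv_into S (cdf (density lborel fs)) v) \<partial>lborel)
    = cdf (density lborel ft) z"
proof -
  interpret Ms: atomless_real_distribution "density lborel fs"
    by (rule atomless_real_distribution_density[OF fs prob_fs])
  interpret Mt: prob_space "density lborel ft" by (rule prob_ft)
  note [measurable] = fs ft Ms.borel_measurable_inv_into_cdf[OF bij_cdf]
  let ?F = "cdf (density lborel fs)" let ?b = "\<lambda>v. ft (inv_into S ?F v) / fs (inv_into S ?F v)"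
  have "(\<integral>v\<in>{0..?F z}. ?b v \<partial>lborel)
      = enn2real (\<integral>\<^sup>+v. ennreal (indicator {0..?F z} v *\<^sub>R ?b v) \<partial>lborel)"
    unfolding set_lebesgue_integral_def
    by (rule integral_eq_nn_integral) (measurable, use fs_nonneg ft_nonneg in simp)
  also have "(\<integral>\<^sup>+v. ennreal (indicator {0..?F z} v *\<^sub>R ?b v) \<partial>lborel)
      = (\<integral>\<^sup>+v. ennreal (?b v) * indicator {0..?F z} v \<partial>lborel)"
    by (intro nn_integral_cong) (simp split: split_indicator)
  also have "\<dots> = emeasure (density lborel ft) {..z}"
    by (rule nn_integral_likelihood_ratio_inv_into_cdf)
  also have "enn2real (emeasure (density lborel ft) {..z}) = cdf (density lborel ft) z"
    by (simp add: cdf_def2 Mt.emeasure_eq_measure)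
  finally show ?thesis .
qed

end

lemma prob_space_density_eq_distr:
  assumes "prob_space P" "sets P = sets borel" "g \<in> borel_measurable borel"
    and "distr P borel g = density lborel f"
  shows "prob_space (density lborel f)"
  using assms by (metis prob_space.prob_space_distr measurable_cong_sets)

lemma borel_measurable_ent_loss[measurable]: "ent_loss \<in> borel_measurable (borel :: (real ^ 'k) measure)"
  unfolding ent_loss_def[abs_def] by measurable

theorem proposition2:
  fixes f :: "real ^ 'm \<Rightarrow> real ^ 'd \<Rightarrow> real ^ 'k"
    and \<theta> \<omega> :: "real ^ 'm"
    and Ps Pt :: "(real ^ 'd) measure"
    and fs ft :: "real \<Rightarrow> real"
    and S :: "real set"
    and p :: real
  assumes Ps: "prob_space Ps" "sets Ps = sets borel"
    and Pt: "prob_space Pt" "sets Pt = sets borel"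
    and f_prob: "\<And>w x. prob_vector (f w x)"
    and f_src_meas: "f \<theta> \<in> borel_measurable borel"
    and f_ad_meas: "f (\<theta> + \<omega>) \<in> borel_measurable borel"
    and fs: "fs \<in> borel_measurable borel" "\<And>z. 0 \<le> fs z"
    and ft: "ft \<in> borel_measurable borel" "\<And>z. 0 \<le> ft z"
    and Zs_density: "distr Ps borel (\<lambda>x. ent_loss (f \<theta> x)) = density lborel fs"
    and Zt_density: "distr Pt borel (\<lambda>x. ent_loss (f (\<theta> + \<omega>) x)) = density lborel ft"
    and Fs_inv: "bij_betw (cdf (density lborel fs)) S {0<..<1}"
    and lr_exists: "AE z in lborel. fs z = 0 \<longrightarrow> ft z = 0"
    and p: "1 \<le> p"
  shows "optimal_transport_map p (density lborel ft) (density lborel fs)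
           (\<lambda>z. let Fs = cdf (density lborel fs);
                    Fs_inv = inv_into S Fs;
                    b_opt = (\<lambda>u. ft (Fs_inv u) / fs (Fs_inv u));
                    Q_opt = (\<lambda>u. \<integral>v\<in>{0..u}. b_opt v \<partial>lborel)
                in Fs_inv (Q_opt (Fs z)))"
proof -
  have prob_fs: "prob_space (density lborel fs)"
    using f_src_meas by (intro prob_space_density_eq_distr[OF Ps _ Zs_density]) measurable
  have prob_ft: "prob_space (density lborel ft)"
    using f_ad_meas by (intro prob_space_density_eq_distr[OF Pt _ Zt_density]) measurable
  \<comment> \<open>the entropies enter only through their densities\<close>
  interpret monotone_rearrangement "density lborel ft" "density lborel fs" S
    using atomless_real_distribution_density[OF fs(1) prob_fs]
      atomless_real_distribution_density[OF ft(1) prob_ft] Fs_inv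
    by (intro monotone_rearrangement.intro monotone_rearrangement_axioms.intro)
  show ?thesis
    using optimal_transport_map_rearrangement[OF p]
      integral_likelihood_ratio_inv_into_cdf[OF fs ft prob_fs prob_ft Fs_inv lr_exists]
    by (simp add: Let_def rearrangement_def[abs_def])
qed

end
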